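(* Let $m, n_0, n_1$ be positive integers and $n(\lambda) = n_0 + n_1\lambda$. Let $x_0, y_0, z_0$ be positive rational numbers with $m/n_0 = 1/x_0 + 1/y_0 + 1/z_0$. Consider polynomials $x(\lambda), y(\lambda), z(\lambda)$ with rational coefficients and constant terms $x(0) = x_0$, $y(0) = y_0$, $z(0) = z_0$, such that $x$ and $z$ have degree $1$, $y$ has degree $2$, and $$\frac{m}{n(\lambda)} = \frac{1}{x(\lambda)} + \frac{1}{y(\lambda)} + \frac{1}{z(\lambda)}$$ holds identically in $\lambda$. Up to interchanging the roles of $x$ and $z$, there are exactly two such solutions, namely $$z_+(\lambda) = z_0 + \frac{n_1}{n_0}\frac{y_0 z_0}{y_0 + z_0}\lambda,\quad x_+(\lambda) = x_0 + x_0\frac{n_1}{n_0}\lambda,\quad y_+(\lambda) = y_0 + y_0\frac{n_1}{n_0}\Big(1 + \frac{y_0}{y_0+z_0}\Big)\lambda + \Big(y_0\frac{n_1}{n_0}\Big)^2\frac{1}{y_0+z_0}\lambda^2,$$ and $$z_-(\lambda) = z_0 + \frac{n_1}{m}\frac{x_0+z_0}{x_0}\lambda,\quad x_-(\lambda) = x_0 + \frac{n_1}{m}\frac{x_0+z_0}{z_0}\lambda,\quad y_-(\lambda) = y_0 + \Big(\frac{2 y_0 n_1}{n_0} - \frac{n_1}{m}\Big)\lambda + \frac{n_1}{n_0}\Big(\frac{y_0 n_1}{n_0} - \frac{n_1}{m}\Big)\lambda^2 .$$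
   Context: $\lambda$ is an indeterminate; the equation is an identity of rational functions in $\lambda$. *)

theory Defs
  imports "HOL-Computational_Algebra.Polynomial" "HOL-Computational_Algebra.Fraction_Field"
begin

definition egypt_identity :: "rat \<Rightarrow> rat poly \<Rightarrow> rat poly \<Rightarrow> rat poly \<Rightarrow> rat poly \<Rightarrow> bool" where
  "egypt_identity m n x y z \<longleftrightarrow>
     Fract [:m:] 1 / Fract n 1 =
       inverse (Fract x 1) + inverse (Fract y 1) + inverse (Fract z 1)"

definition sol_plus :: "rat \<Rightarrow> rat \<Rightarrow> rat \<Rightarrow> rat \<Rightarrow> rat \<Rightarrow> rat poly \<times> rat poly \<times> rat poly" where
  "sol_plus n0 n1 x0 y0 z0 =
     ([:x0, x0 * (n1 / n0):],
      [:y0, y0 * (n1 / n0) * (1 + y0 / (y0 + z0)), (y0 * (n1 / n0))^2 * (1 / (y0 + z0)):],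
      [:z0, (n1 / n0) * (y0 * z0 / (y0 + z0)):])"

definition sol_minus :: "rat \<Rightarrow> rat \<Rightarrow> rat \<Rightarrow> rat \<Rightarrow> rat \<Rightarrow> rat \<Rightarrow> rat poly \<times> rat poly \<times> rat poly" where
  "sol_minus m n0 n1 x0 y0 z0 =
     ([:x0, (n1 / m) * ((x0 + z0) / z0):],
      [:y0, 2 * y0 * n1 / n0 - n1 / m, (n1 / n0) * (y0 * n1 / n0 - n1 / m):],
      [:z0, (n1 / m) * ((x0 + z0) / x0):])"

definition swap_xz :: "'a \<times> 'b \<times> 'a \<Rightarrow> 'a \<times> 'b \<times> 'a" where
  "swap_xz t = (case t of (a, b, c) \<Rightarrow> (c, b, a))"

end

theory Submission
  imports Defs
begin

text \<open>Clearing denominators, the identity reads m x y z = n (y z + x z + x y) in Q[lambda].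
  Its coefficient of lambda^4 gives m a c = n1 (a + c) for the leading coefficients a, c of
  x, z. Evaluated at a root of one of n, x, z at which the other two do not vanish, the identity
  forces y to vanish there; as y has degree 2, two of the three linear polynomials n, x, z must
  share a root. Each of the three possibilities fixes x and z, and then y is determined by
  y (m x z - n (x + z)) = n x z, whose bracket has constant term n0 x0 z0 / y0, which is nonzero.
  In particular the constant term of y is forced.\<close>

definition cleared_egypt_identity ::
    "'a::comm_ring_1 \<Rightarrow> 'a poly \<Rightarrow> 'a poly \<Rightarrow> 'a poly \<Rightarrow> 'a poly \<Rightarrow> bool" where
  "cleared_egypt_identity M N x y z \<longleftrightarrow> smult M (x * y * z) = N * (y * z + x * z + x * y)"

lemma egypt_identity_iff_cleared:
  assumes "N \<noteq> 0" "x \<noteq> 0" "y \<noteq> 0" "z \<noteq> 0"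
  shows "egypt_identity M N x y z \<longleftrightarrow> cleared_egypt_identity M N x y z"
  using assms by (simp add: egypt_identity_def cleared_egypt_identity_def eq_fract algebra_simps)

lemma cleared_egypt_identity_swap:
  "cleared_egypt_identity M N z y x \<longleftrightarrow> cleared_egypt_identity M N x y z"
  by (simp add: cleared_egypt_identity_def ac_simps)

lemma poly_cleared_egypt_identity:
  assumes "cleared_egypt_identity M N x y z"
  shows "M * (poly x t * poly y t * poly z t) =
           poly N t * (poly y t * poly z t + poly x t * poly z t + poly x t * poly y t)"
  using arg_cong[OF assms[unfolded cleared_egypt_identity_def], of "\<lambda>p. poly p t"] by simp

lemma cleared_egypt_identity_middle_unique:
  fixes x y y' z N :: "'a::idom poly"
  assumes "cleared_egypt_identity M N x y z" "cleared_egypt_identity M N x y' z"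
    and "smult M (x * z) \<noteq> N * (x + z)"
  shows "y = y'"
proof -
  have "w * (smult M (x * z) - N * (x + z)) = N * (x * z)"
    if "cleared_egypt_identity M N x w z" for w
    using that unfolding cleared_egypt_identity_def by (simp add: algebra_simps)
  then have "(y - y') * (smult M (x * z) - N * (x + z)) = 0"
    using assms(1,2) by (simp add: left_diff_distrib)
  then show ?thesis using assms(3) by simp
qed

lemma linear_poly_has_root:
  fixes p :: "'a::field poly"
  assumes "degree p = 1"
  obtains t where "poly p t = 0"
proof -
  obtain a b where "p = [:b, a:]" "a \<noteq> 0" using degree1_coeffs[OF assms] .
  then have "poly p (- b / a) = 0" by simp
  then show thesis by (rule that)
qed

lemma linear_common_root:
  fixes a0 a1 b0 b1 :: "'a::comm_ring_1"
  assumes "poly [:a0, a1:] t = 0" "poly [:b0, b1:] t = 0"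
  shows "a0 * b1 = a1 * b0"
proof -
  have "a0 * b1 - a1 * b0 = b1 * poly [:a0, a1:] t - a1 * poly [:b0, b1:] t"
    by (simp add: algebra_simps)
  then show ?thesis using assms by simp
qed

lemma cleared_egypt_identity_shared_root:
  fixes N x y z :: "'a::field poly"
  assumes eq: "cleared_egypt_identity M N x y z" and "M \<noteq> 0"
    and deg: "degree N = 1" "degree x = 1" "degree z = 1" "degree y \<le> 2" and "y \<noteq> 0"
  obtains t where "poly N t = 0" "poly x t = 0"
    | t where "poly N t = 0" "poly z t = 0"
    | t where "poly x t = 0" "poly z t = 0"
proof -
  obtain r s u where r: "poly N r = 0" and s: "poly x s = 0" and u: "poly z u = 0"
    using linear_poly_has_root deg by metis
  show thesis
  proof (rule ccontr)
    assume "\<not> thesis"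
    then have "poly x r \<noteq> 0" "poly z r \<noteq> 0" "poly N s \<noteq> 0" "poly z s \<noteq> 0"
      "poly N u \<noteq> 0" "poly x u \<noteq> 0"
      using that r s u by metis+
    then have roots: "poly y r = 0" "poly y s = 0" "poly y u = 0"
      using poly_cleared_egypt_identity[OF eq, of r] poly_cleared_egypt_identity[OF eq, of s]
        poly_cleared_egypt_identity[OF eq, of u] \<open>M \<noteq> 0\<close> r s u by simp_all
    have "r \<noteq> s" "r \<noteq> u" "s \<noteq> u"
      using \<open>poly x r \<noteq> 0\<close> \<open>poly z r \<noteq> 0\<close> \<open>poly z s \<noteq> 0\<close> s u by auto
    then have "3 = card {r, s, u}" by simp
    also have "\<dots> \<le> card {t. poly y t = 0}"
      using roots by (intro card_mono poly_roots_finite \<open>y \<noteq> 0\<close>) auto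
    also have "\<dots> \<le> degree y" by (rule card_poly_roots_bound[OF \<open>y \<noteq> 0\<close>])
    finally show False using deg by simp
  qed
qed

lemma cleared_egypt_identity_lead_coeffs:
  fixes M n0 n1 x0 a y0 b1 b2 z0 c :: "'a::idom"
  assumes "cleared_egypt_identity M [:n0, n1:] [:x0, a:] [:y0, b1, b2:] [:z0, c:]" "b2 \<noteq> 0"
  shows "M * a * c = n1 * (a + c)"
proof -
  have "b2 * (M * a * c - n1 * (a + c)) = 0"
    using assms(1) unfolding cleared_egypt_identity_def by (simp add: algebra_simps)
  then show ?thesis using assms(2) by simp
qed

lemma sol_plus_solves:
  fixes M n0 n1 x0 y0 z0 :: rat
  assumes "n0 > 0" "x0 > 0" "y0 > 0" "z0 > 0"
    and M: "M = n0 * (1 / x0 + 1 / y0 + 1 / z0)"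
    and sol: "(x, y, z) = sol_plus n0 n1 x0 y0 z0"
  shows "cleared_egypt_identity M [:n0, n1:] x y z"
proof -
  \<comment> \<open>With the quotients named, each coefficient equation is an ideal-membership
    consequence of the defining relations below, which \<open>algebra\<close> decides.\<close>
  define k where "k = n1 / n0"
  define w where "w = 1 / (y0 + z0)"
  have k: "n1 = k * n0" and w: "w * (y0 + z0) = 1" and
    M': "M * x0 * y0 * z0 = n0 * (y0 * z0 + x0 * z0 + x0 * y0)"
    using assms by (simp_all add: k_def w_def M field_simps)
  have xyz: "x = [:x0, x0 * k:]" "y = [:y0, y0 * k * (1 + y0 * w), (y0 * k)^2 * w:]"
    "z = [:z0, k * (y0 * z0 * w):]"
    using sol by (simp_all add: sol_plus_def k_def w_def)
  show ?thesis
    unfolding xyz cleared_egypt_identity_def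
    by (simp add: algebra_simps) (intro conjI; use k w M' in algebra)
qed

lemma sol_minus_solves:
  fixes M n0 n1 x0 y0 z0 :: rat
  assumes "n0 > 0" "x0 > 0" "y0 > 0" "z0 > 0"
    and M: "M = n0 * (1 / x0 + 1 / y0 + 1 / z0)"
    and sol: "(x, y, z) = sol_minus M n0 n1 x0 y0 z0"
  shows "cleared_egypt_identity M [:n0, n1:] x y z"
proof -
  have "M > 0" unfolding M using assms by (intro mult_pos_pos add_pos_pos) simp_all
  define k where "k = n1 / M"
  define j where "j = n1 / n0"
  define p where "p = 1 / x0"
  define q where "q = 1 / z0"
  have k: "n1 = k * M" and j: "n1 = j * n0" and p: "p * x0 = 1" and q: "q * z0 = 1"
    using assms(1-4) \<open>M > 0\<close> by (simp_all add: k_def j_def p_def q_def)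
  have M': "M * x0 * y0 * z0 = n0 * (y0 * z0 + x0 * z0 + x0 * y0)"
    using assms by (simp add: M field_simps)
  have xyz: "x = [:x0, k * ((x0 + z0) * q):]" "y = [:y0, 2 * y0 * j - k, j * (y0 * j - k):]"
    "z = [:z0, k * ((x0 + z0) * p):]"
    using sol by (simp_all add: sol_minus_def k_def j_def p_def q_def)
  show ?thesis
    unfolding xyz cleared_egypt_identity_def
    by (simp add: algebra_simps) (intro conjI; use k j p q M' in algebra)
qed

lemma cleared_egypt_identity_middle_unique_pos:
  fixes M n0 x0 y0 z0 :: rat
  assumes "cleared_egypt_identity M N x y z" "cleared_egypt_identity M N x y' z"
    and "poly N 0 = n0" "poly x 0 = x0" "poly z 0 = z0"
    and "n0 > 0" "x0 > 0" "y0 > 0" "z0 > 0" "M = n0 * (1 / x0 + 1 / y0 + 1 / z0)"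
  shows "y = y'"
proof (rule cleared_egypt_identity_middle_unique[OF assms(1,2)])
  have "poly (smult M (x * z) - N * (x + z)) 0 = n0 * x0 * z0 / y0"
    using assms(3-) by (simp add: field_simps)
  also have "\<dots> \<noteq> 0"
    using assms(6-9) by simp
  finally show "smult M (x * z) \<noteq> N * (x + z)"
    by (metis eq_iff_diff_eq_0 poly_0)
qed

lemma sol_plus_unique:
  fixes M n0 n1 x0 y0 z0 a c :: rat
  assumes pos: "n0 > 0" "n1 > 0" "x0 > 0" "y0 > 0" "z0 > 0"
    and M: "M = n0 * (1 / x0 + 1 / y0 + 1 / z0)"
    and eq: "cleared_egypt_identity M [:n0, n1:] [:x0, a:] y [:z0, c:]"
    and lead: "M * a * c = n1 * (a + c)"
    and root: "n0 * a = n1 * x0"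
  shows "([:x0, a:], y, [:z0, c:]) = sol_plus n0 n1 x0 y0 z0"
proof -
  have a: "a = x0 * (n1 / n0)"
    using root pos by (simp add: field_simps)
  have "n1 * (c * (M * x0 - n0) - x0 * n1) = 0"
    using lead root by algebra
  then have "c * (M * x0 - n0) = x0 * n1"
    using pos by simp
  moreover have "M * x0 - n0 = n0 * x0 * (y0 + z0) / (y0 * z0)"
    using pos by (simp add: M field_simps)
  ultimately have "x0 * (c * (n0 * (y0 + z0)) - n1 * (y0 * z0)) = 0"
    using pos by (simp add: field_simps)
  then have "c * (n0 * (y0 + z0)) = n1 * (y0 * z0)"
    using pos by simp
  moreover have "n0 * (y0 + z0) \<noteq> 0"
    using pos by simp
  ultimately have c: "c = (n1 / n0) * (y0 * z0 / (y0 + z0))"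
    by (simp add: eq_divide_eq)
  obtain y' where sol: "sol_plus n0 n1 x0 y0 z0 = ([:x0, a:], y', [:z0, c:])"
    unfolding sol_plus_def a c by simp
  have "y = y'"
    using cleared_egypt_identity_middle_unique_pos[OF eq sol_plus_solves[OF _ _ _ _ M sol[symmetric]]]
      pos M by simp
  with sol show ?thesis by simp
qed

lemma sol_minus_unique:
  fixes M n0 n1 x0 y0 z0 a c :: rat
  assumes pos: "n0 > 0" "x0 > 0" "y0 > 0" "z0 > 0"
    and M: "M = n0 * (1 / x0 + 1 / y0 + 1 / z0)"
    and eq: "cleared_egypt_identity M [:n0, n1:] [:x0, a:] y [:z0, c:]"
    and lead: "M * a * c = n1 * (a + c)"
    and "a \<noteq> 0" "c \<noteq> 0"
    and root: "x0 * c = a * z0"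
  shows "([:x0, a:], y, [:z0, c:]) = sol_minus M n0 n1 x0 y0 z0"
proof -
  have "M > 0" unfolding M using pos by (intro mult_pos_pos add_pos_pos) simp_all
  have "a * (M * a * z0 - n1 * (x0 + z0)) = 0" "c * (M * c * x0 - n1 * (x0 + z0)) = 0"
    using lead root by algebra+
  then have "M * a * z0 = n1 * (x0 + z0)" "M * c * x0 = n1 * (x0 + z0)"
    using \<open>a \<noteq> 0\<close> \<open>c \<noteq> 0\<close> by simp_all
  then have a: "a = (n1 / M) * ((x0 + z0) / z0)" and c: "c = (n1 / M) * ((x0 + z0) / x0)"
    using \<open>M > 0\<close> pos by (simp_all add: field_simps)
  obtain y' where sol: "sol_minus M n0 n1 x0 y0 z0 = ([:x0, a:], y', [:z0, c:])"
    unfolding sol_minus_def a c by simp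
  have "y = y'"
    using cleared_egypt_identity_middle_unique_pos[OF eq sol_minus_solves[OF _ _ _ _ M sol[symmetric]]]
      pos M by simp
  with sol show ?thesis by simp
qed

lemma solutions_satisfy_cleared_egypt_identity:
  fixes M n0 n1 x0 y0 z0 :: rat
  assumes pos: "n0 > 0" "x0 > 0" "y0 > 0" "z0 > 0"
    and M: "M = n0 * (1 / x0 + 1 / y0 + 1 / z0)"
    and sol: "(x, y, z) = sol_plus n0 n1 x0 y0 z0
      \<or> (x, y, z) = swap_xz (sol_plus n0 n1 z0 y0 x0)
      \<or> (x, y, z) = sol_minus M n0 n1 x0 y0 z0"
  shows "cleared_egypt_identity M [:n0, n1:] x y z"
  using sol
proof (elim disjE)
  assume "(x, y, z) = swap_xz (sol_plus n0 n1 z0 y0 x0)"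
  then have "(z, y, x) = sol_plus n0 n1 z0 y0 x0"
    by (cases "sol_plus n0 n1 z0 y0 x0") (simp add: swap_xz_def)
  moreover have "M = n0 * (1 / z0 + 1 / y0 + 1 / x0)"
    using M by (simp add: ac_simps)
  ultimately have "cleared_egypt_identity M [:n0, n1:] z y x"
    using sol_plus_solves[OF pos(1,4,3,2)] by blast
  then show ?thesis
    by (subst (asm) cleared_egypt_identity_swap)
qed (use sol_plus_solves[OF pos M] sol_minus_solves[OF pos M] in auto)

lemma cleared_egypt_identity_solutions:
  fixes M n0 n1 x0 y0 z0 :: rat and x y z :: "rat poly"
  assumes pos: "n0 > 0" "n1 > 0" "x0 > 0" "y0 > 0" "z0 > 0"
    and M: "M = n0 * (1 / x0 + 1 / y0 + 1 / z0)"
    and "poly x 0 = x0" "poly z 0 = z0"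
    and deg: "degree x = 1" "degree z = 1" "degree y = 2"
    and eq: "cleared_egypt_identity M [:n0, n1:] x y z"
  shows "(x, y, z) = sol_plus n0 n1 x0 y0 z0
      \<or> (x, y, z) = swap_xz (sol_plus n0 n1 z0 y0 x0)
      \<or> (x, y, z) = sol_minus M n0 n1 x0 y0 z0"
proof -
  obtain a where x: "x = [:x0, a:]" "a \<noteq> 0"
    using degree1_coeffs[OF deg(1)] \<open>poly x 0 = x0\<close>
    by (metis poly_pCons poly_0 mult_zero_left add_0_right)
  obtain c where z: "z = [:z0, c:]" "c \<noteq> 0"
    using degree1_coeffs[OF deg(2)] \<open>poly z 0 = z0\<close>
    by (metis poly_pCons poly_0 mult_zero_left add_0_right)
  obtain b0 b1 b2 where y: "y = [:b0, b1, b2:]" "b2 \<noteq> 0"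
    using degree2_coeffs[OF deg(3)] by metis
  have lead: "M * a * c = n1 * (a + c)"
    using cleared_egypt_identity_lead_coeffs eq x y z by blast
  have "M > 0" unfolding M using pos by (intro mult_pos_pos add_pos_pos) simp_all
  show ?thesis
  proof (rule cleared_egypt_identity_shared_root[OF eq])
    fix t assume "poly [:n0, n1:] t = 0" "poly x t = 0"
    then have "n0 * a = n1 * x0" using x linear_common_root by blast
    then show ?thesis using sol_plus_unique[OF pos M] eq lead x z by blast
  next
    fix t assume "poly [:n0, n1:] t = 0" "poly z t = 0"
    then have root: "n0 * c = n1 * z0" using z linear_common_root by blast
    have "M = n0 * (1 / z0 + 1 / y0 + 1 / x0)" "M * c * a = n1 * (c + a)"
      using M lead by (simp_all add: ac_simps)
    moreover have "cleared_egypt_identity M [:n0, n1:] [:z0, c:] y [:x0, a:]"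
      using eq x z cleared_egypt_identity_swap by metis
    ultimately have sol: "([:z0, c:], y, [:x0, a:]) = sol_plus n0 n1 z0 y0 x0"
      using sol_plus_unique[OF pos(1,2,5,4,3) _ _ _ root] by blast
    show ?thesis
      unfolding x z by (simp add: swap_xz_def flip: sol)
  next
    fix t assume "poly x t = 0" "poly z t = 0"
    then have "x0 * c = a * z0" using x z linear_common_root by blast
    then show ?thesis using sol_minus_unique[OF pos(1,3-5) M] eq lead x z by blast
  qed (use \<open>M > 0\<close> pos deg y in auto)
qed

theorem lemma6:
  fixes m n0 n1 :: nat and x0 y0 z0 :: rat and x y z :: "rat poly"
  assumes "m > 0" and "n0 > 0" and "n1 > 0"
    and "x0 > 0" and "y0 > 0" and "z0 > 0"
    and "of_nat m / of_nat n0 = 1 / x0 + 1 / y0 + 1 / z0"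
    and "poly x 0 = x0" and "poly y 0 = y0" and "poly z 0 = z0"
    and "degree x = 1" and "degree z = 1" and "degree y = 2"
  shows "egypt_identity (of_nat m) [:of_nat n0, of_nat n1:] x y z \<longleftrightarrow>
           (x, y, z) = sol_plus (of_nat n0) (of_nat n1) x0 y0 z0
         \<or> (x, y, z) = swap_xz (sol_plus (of_nat n0) (of_nat n1) z0 y0 x0)
         \<or> (x, y, z) = sol_minus (of_nat m) (of_nat n0) (of_nat n1) x0 y0 z0"
proof -
  have pos: "(of_nat n0 :: rat) > 0" "(of_nat n1 :: rat) > 0"
    using assms(2,3) by simp_all
  have M: "(of_nat m :: rat) = of_nat n0 * (1 / x0 + 1 / y0 + 1 / z0)"
    using assms(2,7) by (simp add: divide_eq_eq mult.commute)
  have "[:of_nat n0, of_nat n1:] \<noteq> (0 :: rat poly)" "x \<noteq> 0" "y \<noteq> 0" "z \<noteq> 0"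
    using assms(2,11-13) by auto
  then have "egypt_identity (of_nat m) [:of_nat n0, of_nat n1:] x y z \<longleftrightarrow>
      cleared_egypt_identity (of_nat m) [:of_nat n0, of_nat n1:] x y z"
    by (rule egypt_identity_iff_cleared)
  also have "\<dots> \<longleftrightarrow> (x, y, z) = sol_plus (of_nat n0) (of_nat n1) x0 y0 z0
         \<or> (x, y, z) = swap_xz (sol_plus (of_nat n0) (of_nat n1) z0 y0 x0)
         \<or> (x, y, z) = sol_minus (of_nat m) (of_nat n0) (of_nat n1) x0 y0 z0"
    using cleared_egypt_identity_solutions[OF pos assms(4-6) M assms(8,10-13)]
      solutions_satisfy_cleared_egypt_identity[OF pos(1) assms(4-6) M] by blast
  finally show ?thesis .
qed

end
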